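(* Let $G = K \rtimes_\varphi \langle t\rangle$ be a finitely generated group, where $K$ is abelian, $\langle t\rangle$ is infinite cyclic and $\varphi\in\mathrm{Aut}(K)$. Let $R$ be a finite symmetric subset of $K$ such that $S=R\cup\{t^{\pm1}\}$ generates $G$. Let $g\in G$ be a minimal length conjugacy representative. (i) If the $t$-exponent sum of $g$ is $0$, then there is $w\in\mathcal C_0$ such that $g$ is represented by some cyclic permutation of $w$. (ii) If the $t$-exponent sum of $g$ is $m>0$, then there is $w\in\mathcal C_m$ such that $g$ is represented by some cyclic permutation of $w$.
   Context: $K$ is written additively; $(x,t^m)$ has $t$-exponent sum $m$; $tkt^{-1}=\varphi(k)$. An element $g$ is a minimal length conjugacy representative if its word length (w.r.t. $S$) is minimal among all its conjugates. $W(R)$ is the set of words in $R$; a word is a geodesic if its freely reduced length equals the word length of the element it represents. $W'$ is the set of geodesic words of the form $t^{-p}u_0\,t\,u_1\,t\cdots u_{d-1}\,t\,u_d\,t^{-q}t^{m}$ with $p,q,m\ge0$, $d=p+q$, $u_i\in W(R)$. $\mathcal C_0=\{u_0tu_1t\cdots u_{d-1}tu_dt^{-d}\in W' : d\ge0,\ u_i\in W(R)\}$ and, for $m>0$, $\mathcal C_m=\{u_0tu_1t\cdots u_{m-1}t\in W' : u_i\in W(R)\}$. A cyclic permutation of a word $s_1\cdots s_\ell$ is a word $s_{j+1}\cdots s_\ell s_1\cdots s_j$. *)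

theory Defs
  imports Main
begin

text \<open>An element (x, m) stands for x t^m, with
t k t^-1 = phi k, so (x,m)(y,n) = (x + phi^m y, m + n).\<close>

definition phipow :: "('k \<Rightarrow> 'k) \<Rightarrow> int \<Rightarrow> 'k \<Rightarrow> 'k" where
  "phipow phi m = (if 0 \<le> m then phi ^^ nat m else (inv phi) ^^ nat (- m))"

definition gmul :: "('k::ab_group_add \<Rightarrow> 'k) \<Rightarrow> 'k \<times> int \<Rightarrow> 'k \<times> int \<Rightarrow> 'k \<times> int" where
  "gmul phi a b = (fst a + phipow phi (snd a) (fst b), snd a + snd b)"

definition ginv :: "('k::ab_group_add \<Rightarrow> 'k) \<Rightarrow> 'k \<times> int \<Rightarrow> 'k \<times> int" where
  "ginv phi a = (- phipow phi (- snd a) (fst a), - snd a)"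

definition is_aut :: "('k::ab_group_add \<Rightarrow> 'k) \<Rightarrow> bool" where
  "is_aut phi \<longleftrightarrow> bij phi \<and> (\<forall>x y. phi (x + y) = phi x + phi y)"

datatype 'k letter = Rg 'k | T | Ti

definition Sset :: "'k set \<Rightarrow> 'k letter set" where
  "Sset R = Rg ` R \<union> {T, Ti}"

fun letter_val :: "'k::ab_group_add letter \<Rightarrow> 'k \<times> int" where
  "letter_val (Rg r) = (r, 0)"
| "letter_val T = (0, 1)"
| "letter_val Ti = (0, -1)"

fun evalw :: "('k::ab_group_add \<Rightarrow> 'k) \<Rightarrow> 'k letter list \<Rightarrow> 'k \<times> int" where
  "evalw phi [] = (0, 0)"
| "evalw phi (a # w) = gmul phi (letter_val a) (evalw phi w)"

definition wordlen :: "('k::ab_group_add \<Rightarrow> 'k) \<Rightarrow> 'k set \<Rightarrow> 'k \<times> int \<Rightarrow> nat" where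
  "wordlen phi R g = (LEAST n. \<exists>w. set w \<subseteq> Sset R \<and> length w = n \<and> evalw phi w = g)"

definition geodesic :: "('k::ab_group_add \<Rightarrow> 'k) \<Rightarrow> 'k set \<Rightarrow> 'k letter list \<Rightarrow> bool" where
  "geodesic phi R w \<longleftrightarrow> set w \<subseteq> Sset R \<and> length w = wordlen phi R (evalw phi w)"

definition min_conj_rep :: "('k::ab_group_add \<Rightarrow> 'k) \<Rightarrow> 'k set \<Rightarrow> 'k \<times> int \<Rightarrow> bool" where
  "min_conj_rep phi R g \<longleftrightarrow>
     (\<forall>h. wordlen phi R g \<le> wordlen phi R (gmul phi (gmul phi h g) (ginv phi h)))"

definition WR :: "'k set \<Rightarrow> 'k letter list set" where
  "WR R = {u. set u \<subseteq> Rg ` R}"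

fun joinT :: "'k letter list list \<Rightarrow> 'k letter list" where
  "joinT [] = []"
| "joinT [u] = u"
| "joinT (u # us) = u @ [T] @ joinT us"

definition tpow :: "int \<Rightarrow> 'k letter list" where
  "tpow k = (if 0 \<le> k then replicate (nat k) T else replicate (nat (- k)) Ti)"

definition Wprime :: "('k::ab_group_add \<Rightarrow> 'k) \<Rightarrow> 'k set \<Rightarrow> 'k letter list set" where
  "Wprime phi R = {w. geodesic phi R w \<and>
     (\<exists>p q m us. length us = p + q + 1 \<and> (\<forall>u\<in>set us. u \<in> WR R) \<and>
        w = replicate p Ti @ joinT us @ tpow (int m - int q))}"

definition C0 :: "('k::ab_group_add \<Rightarrow> 'k) \<Rightarrow> 'k set \<Rightarrow> 'k letter list set" where
  "C0 phi R = {w \<in> Wprime phi R. \<exists>d us. length us = d + 1 \<and> (\<forall>u\<in>set us. u \<in> WR R) \<and>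
        w = joinT us @ replicate d Ti}"

definition Cm :: "('k::ab_group_add \<Rightarrow> 'k) \<Rightarrow> 'k set \<Rightarrow> nat \<Rightarrow> 'k letter list set" where
  "Cm phi R m = {w \<in> Wprime phi R. \<exists>us. length us = m \<and> (\<forall>u\<in>set us. u \<in> WR R) \<and>
        w = concat (map (\<lambda>u. u @ [T]) us)}"

end

theory Submission
  imports Defs
begin

text \<open>In a word over S, an R-letter r standing at height h (the t-exponent sum of the prefix
before it) contributes phi^h r to the K-part of the value. So the R-letters of a shortest word w0
for g may be regrouped by height into u_0 t u_1 ... t u_d t^-d, or, at the price of conjugating
by an element of K, by height modulo m into u_0 t ... u_(m-1) t; either word represents a
conjugate of g.

If g has exponent sum 0, w0 is a closed walk whose heights span an interval of length d, so it
contains at least d letters t and d letters t^-1; the regrouped word is thus no longer than w0, hence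
geodesic. It represents a conjugate of g by a power of t, and since g lies in the abelian group K,
the rotation of it that starts at height 0 represents g itself.
If g has exponent sum m > 0, the regrouped word has length (number of R-letters) + m, and
minimality of g forces w0 to contain m letters t and no t^-1, so w0 is already a cyclic
permutation of a word of the form u_0 t ... u_(m-1) t.\<close>

lemma funpow_additive:
  fixes f :: "'a::ab_group_add \<Rightarrow> 'a"
  assumes "\<And>x y. f (x + y) = f x + f y"
  shows "(f ^^ n) (x + y) = (f ^^ n) x + (f ^^ n) y"
  by (induction n) (simp_all add: assms)

lemma sum_list_map_concat: "(\<Sum>x\<leftarrow>concat xss. f x) = (\<Sum>xs\<leftarrow>xss. \<Sum>x\<leftarrow>xs. f x)"
  by (induction xss) auto

lemma sum_list_group_by:
  fixes f :: "'a \<Rightarrow> 'b::comm_monoid_add"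
  assumes "\<forall>p\<in>set L. key p < n"
  shows "(\<Sum>p\<leftarrow>L. f p) = (\<Sum>j\<leftarrow>[0..<n]. \<Sum>p\<leftarrow>filter (\<lambda>p. key p = j) L. f p)"
  using assms
proof (induction L)
  case (Cons p L)
  have "(\<Sum>j\<leftarrow>[0..<n]. \<Sum>q\<leftarrow>filter (\<lambda>q. key q = j) (p # L). f q)
      = (\<Sum>j\<leftarrow>[0..<n]. (if key p = j then f p else 0) + (\<Sum>q\<leftarrow>filter (\<lambda>q. key q = j) L. f q))"
    by (rule arg_cong[where f = sum_list], rule map_cong) auto
  also have "\<dots> = f p + (\<Sum>j\<leftarrow>[0..<n]. \<Sum>q\<leftarrow>filter (\<lambda>q. key q = j) L. f q)"
    using Cons.prems by (simp add: sum_list_addf interv_sum_list_conv_sum_set_nat)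
  finally show ?case using Cons by simp
qed simp

locale automorphism =
  fixes phi :: "'k::ab_group_add \<Rightarrow> 'k"
  assumes is_aut: "is_aut phi"
begin

lemma additive: "phi (x + y) = phi x + phi y"
  using is_aut unfolding is_aut_def by blast

lemma apply_inv [simp]: "phi (inv phi z) = z"
  using is_aut unfolding is_aut_def by (simp add: bij_is_surj surj_f_inv_f)

lemma inv_apply [simp]: "inv phi (phi z) = z"
  using is_aut unfolding is_aut_def by (simp add: bij_is_inj)

lemma inv_additive: "inv phi (x + y) = inv phi x + inv phi y"
  by (metis additive apply_inv inv_apply)

lemma phipow_add: "phipow phi a (x + y) = phipow phi a x + phipow phi a y"
  unfolding phipow_def using funpow_additive[of phi] funpow_additive[of "inv phi"] additive inv_additive
  by auto

lemma phipow_zero_right [simp]: "phipow phi a 0 = 0"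
  using phipow_add[of a 0 0] by simp

lemma phipow_minus: "phipow phi a (- x) = - phipow phi a x"
  by (metis add.right_inverse add_eq_0_iff phipow_add phipow_zero_right)

lemma phipow_diff: "phipow phi a (x - y) = phipow phi a x - phipow phi a y"
  using phipow_add[of a x "- y"] by (simp add: phipow_minus)

lemma phipow_0 [simp]: "phipow phi 0 x = x"
  unfolding phipow_def by simp

lemma phipow_plus_1: "phipow phi (a + 1) x = phi (phipow phi a x)"
proof (cases "0 \<le> a")
  case True
  then have "nat (a + 1) = Suc (nat a)" by simp
  with True show ?thesis unfolding phipow_def by simp
next
  case False
  then consider "a = -1" | "a + 1 < 0" by linarith
  then show ?thesis
  proof cases
    case 2
    then have "nat (- a) = Suc (nat (- (a + 1)))" by simp
    with 2 show ?thesis unfolding phipow_def by simp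
  qed (simp add: phipow_def)
qed

lemma phipow_minus_1: "phipow phi (a - 1) x = inv phi (phipow phi a x)"
  using phipow_plus_1[of "a - 1" x] by simp

lemma phipow_phipow: "phipow phi b (phipow phi a x) = phipow phi (a + b) x"
proof (induction b rule: int_induct[where k = 0])
  case (step1 i)
  then show ?case using phipow_plus_1[of i] phipow_plus_1[of "a + i"] by (simp add: add.assoc)
next
  case (step2 i)
  then show ?case using phipow_minus_1[of i] phipow_minus_1[of "a + i"] by (simp add: algebra_simps)
qed simp

lemma phipow_cancel [simp]:
  "phipow phi a (phipow phi (- a) x) = x" "phipow phi (- a) (phipow phi a x) = x"
  by (simp_all add: phipow_phipow)

text \<open>Conjugating an element of t-exponent m by k \<in> K adds k - phi^m k to its K-part
(see gmul_conj); shifting the exponent of phi by a multiple of m changes phi^h r only by such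
a term.\<close>

lemma phipow_shift_multiple: "\<exists>k. phipow phi b r - phipow phi (b + q * int m) r = k - phipow phi (int m) k"
proof (induction q rule: int_induct[where k = 0])
  case base
  show ?case by (rule exI[of _ 0]) simp
next
  case (step1 i)
  then obtain k where k: "phipow phi b r - phipow phi (b + i * int m) r = k - phipow phi (int m) k" by blast
  define y where "y = phipow phi (b + i * int m) r"
  have "phipow phi (b + (i + 1) * int m) r = phipow phi (int m) y"
    unfolding y_def by (simp add: phipow_phipow algebra_simps)
  with k show ?case unfolding y_def[symmetric]
    by (intro exI[of _ "k + y"]) (simp add: phipow_add algebra_simps)
next
  case (step2 i)
  then obtain k where k: "phipow phi b r - phipow phi (b + i * int m) r = k - phipow phi (int m) k" by blast
  define y where "y = phipow phi (b + (i - 1) * int m) r"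
  have "phipow phi (b + i * int m) r = phipow phi (int m) y"
    unfolding y_def by (simp add: phipow_phipow algebra_simps)
  with k show ?case unfolding y_def[symmetric]
    by (intro exI[of _ "k - y"]) (simp add: phipow_diff algebra_simps)
qed

lemma sum_list_phipow_mod:
  "\<exists>k. (\<Sum>p\<leftarrow>L. phipow phi (fst p mod int m) (snd p)) - (\<Sum>p\<leftarrow>L. phipow phi (fst p) (snd p))
     = k - phipow phi (int m) k"
proof (induction L)
  case Nil
  show ?case by (rule exI[of _ 0]) simp
next
  case (Cons p L)
  then obtain k where k: "(\<Sum>p\<leftarrow>L. phipow phi (fst p mod int m) (snd p)) - (\<Sum>p\<leftarrow>L. phipow phi (fst p) (snd p))
     = k - phipow phi (int m) k" ..
  obtain k' where k': "phipow phi (fst p mod int m) (snd p) - phipow phi (fst p) (snd p) = k' - phipow phi (int m) k'"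
    using phipow_shift_multiple[of "fst p mod int m" "snd p" "fst p div int m" m]
    by (auto simp: mod_div_mult_eq)
  show ?case using k k' by (intro exI[of _ "k + k'"]) (simp add: phipow_add algebra_simps)
qed

lemma gmul_assoc: "gmul phi p (gmul phi q r) = gmul phi (gmul phi p q) r"
  by (simp add: gmul_def phipow_add phipow_phipow add.assoc add.commute)

lemma evalw_append: "evalw phi (v @ w) = gmul phi (evalw phi v) (evalw phi w)"
proof (induction v)
  case Nil
  show ?case by (simp add: gmul_def)
qed (simp add: gmul_assoc)

lemma gmul_conj: "gmul phi (gmul phi h (x, m)) (ginv phi h) = (fst h + phipow phi (snd h) x - phipow phi m (fst h), m)"
  by (simp add: gmul_def ginv_def phipow_add phipow_minus phipow_phipow add.commute)

lemma gmul_commute_height0: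
  "snd a + snd b = 0 \<Longrightarrow> gmul phi b a = (phipow phi (snd b) (fst (gmul phi a b)), 0)"
  by (simp add: gmul_def phipow_add phipow_phipow add.commute)

lemma evalw_append_conj:
  "evalw phi (v @ w) = gmul phi (gmul phi (evalw phi v) (evalw phi (w @ v))) (ginv phi (evalw phi v))"
  by (simp add: evalw_append gmul_def ginv_def phipow_add phipow_minus phipow_phipow algebra_simps)

end

fun letter_height :: "'k letter \<Rightarrow> int" where
  "letter_height (Rg r) = 0"
| "letter_height T = 1"
| "letter_height Ti = -1"

definition height :: "'k letter list \<Rightarrow> int" where
  "height w = (\<Sum>a\<leftarrow>w. letter_height a)"

definition ups :: "'k letter list \<Rightarrow> nat" where
  "ups w = length (filter (\<lambda>a. a = T) w)"

definition downs :: "'k letter list \<Rightarrow> nat" where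
  "downs w = length (filter (\<lambda>a. a = Ti) w)"

text \<open>The R-letters of a word paired with their heights (c plus the t-exponent sum of the
preceding prefix); by phipow_fst_evalw, the letter r at height h contributes phi^h r.\<close>

fun levels :: "int \<Rightarrow> 'k letter list \<Rightarrow> (int \<times> 'k) list" where
  "levels c [] = []"
| "levels c (Rg r # w) = (c, r) # levels c w"
| "levels c (T # w) = levels (c + 1) w"
| "levels c (Ti # w) = levels (c - 1) w"

lemma height_simps [simp]:
  "height [] = 0" "height (a # w) = letter_height a + height w" "height (v @ w) = height v + height w"
  by (simp_all add: height_def)

lemma ups_simps [simp]:
  "ups [] = 0" "ups (v @ w) = ups v + ups w"
  "ups (T # w) = Suc (ups w)" "ups (Ti # w) = ups w" "ups (Rg r # w) = ups w"
  by (simp_all add: ups_def)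

lemma downs_simps [simp]:
  "downs [] = 0" "downs (v @ w) = downs v + downs w"
  "downs (T # w) = downs w" "downs (Ti # w) = Suc (downs w)" "downs (Rg r # w) = downs w"
  by (simp_all add: downs_def)

lemma height_eq_ups_minus_downs: "height w = int (ups w) - int (downs w)"
proof (induction w)
  case (Cons a w)
  then show ?case by (cases a) auto
qed simp

lemma height_map_Rg [simp]: "height (map Rg u) = 0"
  by (induction u) auto

lemma height_replicate_Ti [simp]: "height (replicate d Ti) = - int d"
  by (induction d) auto

lemma ups_downs_take_mono:
  assumes "i \<le> j"
  shows "ups (take i w) \<le> ups (take j w)" "downs (take i w) \<le> downs (take j w)"
proof -
  have "take j w = take i w @ take (j - i) (drop i w)"
    using assms by (metis le_add_diff_inverse take_add)
  then show "ups (take i w) \<le> ups (take j w)" "downs (take i w) \<le> downs (take j w)"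
    by simp_all
qed

lemma closed_walk_height_range:
  assumes "height w = 0"
  shows "height (take j w) - height (take i w) \<le> int (ups w)"
    and "height (take j w) - height (take i w) \<le> int (downs w)"
proof -
  define n where "n = max (max i j) (length w)"
  have w: "take n w = w" by (simp add: n_def)
  define U where "U k = int (ups (take k w))" for k
  define D where "D k = int (downs (take k w))" for k
  have H: "height (take k w) = U k - D k" for k
    unfolding U_def D_def by (rule height_eq_ups_minus_downs)
  have mono: "k \<le> l \<Longrightarrow> U k \<le> U l \<and> D k \<le> D l" for k l
    unfolding U_def D_def using ups_downs_take_mono[of k l w] by simp
  have ends: "U 0 = 0" "D 0 = 0" "U n = int (ups w)" "D n = int (downs w)" "U n - D n = 0"
    using assms H[of n] by (simp_all add: U_def D_def w)
  have "i \<le> n" "j \<le> n" by (simp_all add: n_def)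
  then have "U 0 \<le> U i" "U i \<le> U n" "U 0 \<le> U j" "U j \<le> U n"
      "D 0 \<le> D i" "D i \<le> D n" "D 0 \<le> D j" "D j \<le> D n"
    using mono by auto
  moreover have "i \<le> j \<Longrightarrow> U i \<le> U j \<and> D i \<le> D j" "j \<le> i \<Longrightarrow> U j \<le> U i \<and> D j \<le> D i"
    using mono by auto
  ultimately show "height (take j w) - height (take i w) \<le> int (ups w)"
    and "height (take j w) - height (take i w) \<le> int (downs w)"
    unfolding H using ends by (cases "i \<le> j"; linarith)+
qed

lemma length_levels: "length w = length (levels c w) + ups w + downs w"
  by (induction c w rule: levels.induct) auto

lemma levels_append: "levels c (v @ w) = levels c v @ levels (c + height v) w"
  by (induction c v rule: levels.induct) (auto simp: algebra_simps)

lemma levels_map_Rg [simp]: "levels c (map Rg u) = map (Pair c) u"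
  by (induction u) auto

lemma levels_replicate_Ti [simp]: "levels c (replicate d Ti) = []"
  by (induction d arbitrary: c) auto

lemma levels_mem_height:
  "(h, r) \<in> set (levels c w) \<Longrightarrow> \<exists>i \<le> length w. h = c + height (take i w)"
proof (induction c w rule: levels.induct)
  case (2 c r' w)
  show ?case
  proof (cases "(h, r) = (c, r')")
    case False
    with 2 obtain i where "i \<le> length w" "h = c + height (take i w)" by auto
    then show ?thesis by (intro exI[of _ "Suc i"]) auto
  qed (intro exI[of _ 0], auto)
next
  case (3 c w)
  then obtain i where "i \<le> length w" "h = c + 1 + height (take i w)" by auto
  then show ?case by (intro exI[of _ "Suc i"]) auto
next
  case (4 c w)
  then obtain i where "i \<le> length w" "h = c - 1 + height (take i w)" by auto
  then show ?case by (intro exI[of _ "Suc i"]) auto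
qed simp

lemma levels_mem_letter: "(h, r) \<in> set (levels c w) \<Longrightarrow> Rg r \<in> set w"
  by (induction c w rule: levels.induct) auto

lemma levels_letters: "set w \<subseteq> Sset R \<Longrightarrow> snd ` set (levels c w) \<subseteq> R"
  using levels_mem_letter by (fastforce simp: Sset_def)

lemma closed_word_levels_range:
  assumes "height w = 0"
  obtains s d where "s \<le> 0" "nat (- s) \<le> d" "d \<le> ups w" "d \<le> downs w"
    and "\<forall>p\<in>set (levels 0 w). s \<le> fst p \<and> fst p \<le> s + int d"
proof -
  define Hs where "Hs = (\<lambda>i. height (take i w)) ` {0..length w}"
  define s where "s = Min Hs"
  define t where "t = Max Hs"
  have "finite Hs" "0 \<in> Hs"
    unfolding Hs_def by (auto intro: image_eqI[of _ _ 0])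
  then have "s \<in> Hs" "t \<in> Hs" and Hs_bounds: "\<forall>h\<in>Hs. s \<le> h \<and> h \<le> t"
    unfolding s_def t_def by (auto intro: Min_in Max_in)
  with \<open>0 \<in> Hs\<close> have "s \<le> 0" "0 \<le> t"
    by auto
  obtain i j where "s = height (take i w)" "t = height (take j w)"
    using \<open>s \<in> Hs\<close> \<open>t \<in> Hs\<close> unfolding Hs_def by auto
  then have "nat (t - s) \<le> ups w" "nat (t - s) \<le> downs w"
    using closed_walk_height_range[OF assms, of j i] by auto
  moreover have "\<forall>p\<in>set (levels 0 w). fst p \<in> Hs"
    unfolding Hs_def using levels_mem_height by fastforce
  ultimately show thesis
    using that[of s "nat (t - s)"] Hs_bounds \<open>s \<le> 0\<close> \<open>0 \<le> t\<close> by auto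
qed

definition stairs :: "(nat \<Rightarrow> 'k list) \<Rightarrow> nat \<Rightarrow> 'k letter list" where
  "stairs u n = concat (map (\<lambda>j. map Rg (u j) @ [T]) [0..<n])"

lemma stairs_0 [simp]: "stairs u 0 = []"
  by (simp add: stairs_def)

lemma stairs_Suc: "stairs u (Suc n) = stairs u n @ map Rg (u n) @ [T]"
  by (simp add: stairs_def)

lemma height_stairs [simp]: "height (stairs u n) = int n"
  by (induction n) (simp_all add: stairs_Suc)

lemma length_stairs: "length (stairs u n) = (\<Sum>j\<leftarrow>[0..<n]. length (u j)) + n"
  by (induction n) (simp_all add: stairs_Suc)

lemma levels_stairs:
  "levels c (stairs u n) = concat (map (\<lambda>j. map (Pair (c + int j)) (u j)) [0..<n])"
  by (induction n) (simp_all add: stairs_Suc levels_append)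

lemma set_stairs: "(\<And>j. set (u j) \<subseteq> R) \<Longrightarrow> set (stairs u n) \<subseteq> Sset R"
  by (auto simp: stairs_def Sset_def)

lemma stairs_prefix: "i \<le> n \<Longrightarrow> \<exists>v. stairs u n = stairs u i @ v"
  by (induction n) (auto simp: stairs_Suc le_Suc_eq)

lemma joinT_snoc: "joinT (us @ [u]) = (if us = [] then u else joinT us @ [T] @ u)"
  by (induction us rule: joinT.induct) auto

lemma joinT_upt_eq_stairs: "joinT (map (\<lambda>j. map Rg (u j)) [0..<Suc n]) = stairs u n @ map Rg (u n)"
proof (induction n)
  case (Suc n)
  let ?us = "map (\<lambda>j. map Rg (u j)) [0..<Suc n]"
  have "joinT (map (\<lambda>j. map Rg (u j)) [0..<Suc (Suc n)]) = joinT (?us @ [map Rg (u (Suc n))])"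
    by simp
  also have "\<dots> = joinT ?us @ [T] @ map Rg (u (Suc n))"
    by (subst joinT_snoc) simp
  finally show ?case using Suc by (simp add: stairs_Suc)
qed simp

definition level_block :: "(int \<Rightarrow> nat) \<Rightarrow> (int \<times> 'k) list \<Rightarrow> nat \<Rightarrow> 'k list" where
  "level_block key L j = map snd (filter (\<lambda>p. key (fst p) = j) L)"

lemma set_level_block: "snd ` set L \<subseteq> R \<Longrightarrow> set (level_block key L j) \<subseteq> R"
  by (auto simp: level_block_def)

lemma length_stairs_level_block:
  assumes "\<forall>p\<in>set L. key (fst p) < n"
  shows "length (stairs (level_block key L) n) = length L + n"
  using sum_list_group_by[of L "key \<circ> fst" n "\<lambda>_. 1::nat"] assms
  by (simp add: length_stairs level_block_def sum_list_triv)

context automorphism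
begin

lemma snd_evalw: "snd (evalw phi w) = height w"
proof (induction w)
  case (Cons a w)
  then show ?case by (cases a) (simp_all add: gmul_def)
qed simp

lemma phipow_fst_evalw:
  "phipow phi c (fst (evalw phi w)) = (\<Sum>p\<leftarrow>levels c w. phipow phi (fst p) (snd p))"
  by (induction c w rule: levels.induct) (simp_all add: gmul_def phipow_add phipow_phipow add.commute)

lemma fst_evalw: "fst (evalw phi w) = (\<Sum>p\<leftarrow>levels 0 w. phipow phi (fst p) (snd p))"
  using phipow_fst_evalw[of 0 w] by simp

lemma phipow_fst_evalw_stairs_level_block:
  assumes "\<forall>p\<in>set L. key (fst p) < n"
  shows "phipow phi c (fst (evalw phi (stairs (level_block key L) n)))
       = (\<Sum>p\<leftarrow>L. phipow phi (c + int (key (fst p))) (snd p))"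
proof -
  let ?f = "\<lambda>p. phipow phi (c + int (key (fst p))) (snd p)"
  have "phipow phi c (fst (evalw phi (stairs (level_block key L) n)))
      = (\<Sum>j\<leftarrow>[0..<n]. \<Sum>r\<leftarrow>level_block key L j. phipow phi (c + int j) r)"
    by (simp add: phipow_fst_evalw levels_stairs sum_list_map_concat o_def)
  also have "\<dots> = (\<Sum>j\<leftarrow>[0..<n]. \<Sum>p\<leftarrow>filter (\<lambda>p. key (fst p) = j) L. ?f p)"
    unfolding level_block_def
    by (rule arg_cong[where f = sum_list], rule map_cong, simp) (induction L, auto)
  also have "\<dots> = (\<Sum>p\<leftarrow>L. ?f p)"
    using sum_list_group_by[of L "key \<circ> fst" n ?f] assms by simp
  finally show ?thesis .
qed

end

lemma wordlen_le_length: "set w \<subseteq> Sset R \<Longrightarrow> wordlen phi R (evalw phi w) \<le> length w"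
  unfolding wordlen_def by (rule Least_le) auto

lemma obtain_shortest_word:
  assumes "\<forall>h. \<exists>w. set w \<subseteq> Sset R \<and> evalw phi w = h"
  obtains w where "set w \<subseteq> Sset R" "length w = wordlen phi R g" "evalw phi w = g"
proof -
  have "\<exists>w. set w \<subseteq> Sset R \<and> length w = wordlen phi R g \<and> evalw phi w = g"
    unfolding wordlen_def by (rule LeastI_ex) (use assms in blast)
  then show ?thesis using that by blast
qed

lemma min_conj_rep_geodesic:
  assumes "min_conj_rep phi R g" "set w \<subseteq> Sset R" "length w \<le> wordlen phi R g"
    and "evalw phi w = gmul phi (gmul phi h g) (ginv phi h)"
  shows "geodesic phi R w"
proof -
  have "wordlen phi R g \<le> wordlen phi R (evalw phi w)"
    using assms(1,4) unfolding min_conj_rep_def by metis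
  moreover have "wordlen phi R (evalw phi w) \<le> length w"
    using assms(2) by (rule wordlen_le_length)
  ultimately show ?thesis
    using assms(2,3) unfolding geodesic_def by simp
qed

lemma C0I:
  assumes "geodesic phi R w" "length us = d + 1" "\<forall>u\<in>set us. u \<in> WR R"
    and "w = joinT us @ replicate d Ti"
  shows "w \<in> C0 phi R"
proof -
  have "w \<in> Wprime phi R"
    unfolding Wprime_def
    by (rule CollectI, rule conjI[OF assms(1)], rule exI[of _ 0], rule exI[of _ d], rule exI[of _ 0],
        rule exI[of _ us]) (simp add: assms tpow_def)
  with assms show ?thesis unfolding C0_def by blast
qed

lemma joinT_append_T: "us \<noteq> [] \<Longrightarrow> joinT us @ [T] = concat (map (\<lambda>u. u @ [T]) us)"
  by (induction us rule: joinT.induct) auto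

lemma CmI:
  assumes "geodesic phi R w" "length us = m" "0 < m" "\<forall>u\<in>set us. u \<in> WR R"
    and "w = concat (map (\<lambda>u. u @ [T]) us)"
  shows "w \<in> Cm phi R m"
proof -
  have w: "w = joinT us @ [T]"
    using assms(2,3,5) joinT_append_T[of us] by auto
  obtain k where k: "m = Suc k"
    using assms(3) by (cases m) auto
  have "w \<in> Wprime phi R"
    unfolding Wprime_def
    by (rule CollectI, rule conjI[OF assms(1)], rule exI[of _ 0], rule exI[of _ k], rule exI[of _ m],
        rule exI[of _ us]) (simp add: assms(2,4) k tpow_def w)
  with assms show ?thesis unfolding Cm_def by blast
qed

lemma decompose_word_without_Ti:
  assumes "set w \<subseteq> Rg ` R \<union> {T}"
  shows "\<exists>us v. length us = ups w \<and> (\<forall>u\<in>set us. u \<in> WR R) \<and> v \<in> WR R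
           \<and> w = concat (map (\<lambda>u. u @ [T]) us) @ v"
  using assms
proof (induction w)
  case Nil
  show ?case by (intro exI[of _ "[]"]) (simp add: WR_def)
next
  case (Cons a w)
  then obtain us v where IH: "length us = ups w" "\<forall>u\<in>set us. u \<in> WR R" "v \<in> WR R"
    "w = concat (map (\<lambda>u. u @ [T]) us) @ v" by auto
  consider "a = T" | r where "a = Rg r" "r \<in> R"
    using Cons.prems by auto
  then show ?case
  proof cases
    case 1
    with IH show ?thesis by (intro exI[of _ "[] # us"] exI[of _ v]) (auto simp: WR_def)
  next
    case (2 r)
    show ?thesis
    proof (cases us)
      case Nil
      with IH 2 show ?thesis by (intro exI[of _ "[]"] exI[of _ "a # v"]) (auto simp: WR_def)
    next
      case (Cons u us')
      with IH 2 show ?thesis by (intro exI[of _ "(a # u) # us'"] exI[of _ v]) (auto simp: WR_def)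
    qed
  qed
qed

context automorphism
begin

lemma evalw_rotate_height0:
  assumes "snd g = 0"
    and "evalw phi (v @ w) = gmul phi (gmul phi (0, height v) g) (ginv phi (0, height v))"
  shows "evalw phi (rotate (length v) (v @ w)) = g"
proof -
  have vw: "evalw phi (v @ w) = (phipow phi (height v) (fst g), 0)"
    using assms gmul_conj[of "(0, height v)" "fst g" 0] by (cases g) simp
  then have hw: "height w = - height v"
    using snd_evalw[of "v @ w"] by simp
  then have "evalw phi (w @ v) = (phipow phi (height w) (fst (evalw phi (v @ w))), 0)"
    using gmul_commute_height0[of "evalw phi v" "evalw phi w"] by (simp add: snd_evalw evalw_append)
  also have "\<dots> = g"
    using vw hw assms(1) by (simp add: prod_eq_iff)
  finally show ?thesis by (simp add: rotate_append)
qed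

end

definition height_sorted_word :: "int \<Rightarrow> nat \<Rightarrow> (int \<times> 'k) list \<Rightarrow> 'k letter list" where
  "height_sorted_word s d L =
     joinT (map (\<lambda>j. map Rg (level_block (\<lambda>h. nat (h - s)) L j)) [0..<Suc d]) @ replicate d Ti"

lemma height_sorted_word_eq_stairs:
  "height_sorted_word s d L = stairs (level_block (\<lambda>h. nat (h - s)) L) d
     @ map Rg (level_block (\<lambda>h. nat (h - s)) L d) @ replicate d Ti"
  unfolding height_sorted_word_def joinT_upt_eq_stairs by simp

lemma height_height_sorted_word [simp]: "height (height_sorted_word s d L) = 0"
  by (simp add: height_sorted_word_eq_stairs)

lemma levels_height_sorted_word:
  "levels s (height_sorted_word s d L) = levels s (stairs (level_block (\<lambda>h. nat (h - s)) L) (Suc d))"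
  by (simp add: height_sorted_word_eq_stairs stairs_Suc levels_append)

lemma length_height_sorted_word:
  assumes "\<forall>p\<in>set L. s \<le> fst p \<and> fst p \<le> s + int d"
  shows "length (height_sorted_word s d L) = length L + 2 * d"
proof -
  have "\<forall>p\<in>set L. nat (fst p - s) < Suc d"
    using assms by auto
  from length_stairs_level_block[OF this] show ?thesis
    by (simp add: height_sorted_word_eq_stairs stairs_Suc)
qed

lemma set_height_sorted_word:
  "snd ` set L \<subseteq> R \<Longrightarrow> set (height_sorted_word s d L) \<subseteq> Sset R"
  using set_stairs[of "level_block (\<lambda>h. nat (h - s)) L" R d] set_level_block[of L R]
  unfolding height_sorted_word_eq_stairs by (fastforce simp: Sset_def)

lemma height_sorted_word_split:
  assumes "c \<le> d"
  obtains v v' where "height_sorted_word s d L = v @ v'" "height v = int c"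
proof -
  obtain v' where "stairs (level_block (\<lambda>h. nat (h - s)) L) d = stairs (level_block (\<lambda>h. nat (h - s)) L) c @ v'"
    using stairs_prefix[OF assms] by blast
  then show thesis
    by (intro that[of "stairs (level_block (\<lambda>h. nat (h - s)) L) c"]) (simp_all add: height_sorted_word_eq_stairs)
qed

lemma height_sorted_word_in_C0:
  assumes "geodesic phi R (height_sorted_word s d L)" "snd ` set L \<subseteq> R"
  shows "height_sorted_word s d L \<in> C0 phi R"
  using assms set_level_block[OF assms(2)]
  by (intro C0I[where us = "map (\<lambda>j. map Rg (level_block (\<lambda>h. nat (h - s)) L j)) [0..<Suc d]"])
     (fastforce simp: height_sorted_word_def WR_def)+

lemma (in automorphism) phipow_fst_evalw_height_sorted_word:
  assumes "\<forall>p\<in>set L. s \<le> fst p \<and> fst p \<le> s + int d"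
  shows "phipow phi s (fst (evalw phi (height_sorted_word s d L))) = (\<Sum>p\<leftarrow>L. phipow phi (fst p) (snd p))"
proof -
  have key: "\<forall>p\<in>set L. nat (fst p - s) < Suc d"
    using assms by auto
  have "phipow phi s (fst (evalw phi (height_sorted_word s d L)))
      = phipow phi s (fst (evalw phi (stairs (level_block (\<lambda>h. nat (h - s)) L) (Suc d))))"
    by (simp only: phipow_fst_evalw levels_height_sorted_word)
  also have "\<dots> = (\<Sum>p\<leftarrow>L. phipow phi (s + int (nat (fst p - s))) (snd p))"
    using key by (rule phipow_fst_evalw_stairs_level_block)
  also have "\<dots> = (\<Sum>p\<leftarrow>L. phipow phi (fst p) (snd p))"
    using assms by (intro arg_cong[where f = sum_list] map_cong) auto
  finally show ?thesis .
qed

context automorphism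
begin

lemma exponent_sum_zero_case:
  assumes gen: "\<forall>h. \<exists>w. set w \<subseteq> Sset R \<and> evalw phi w = h"
    and min: "min_conj_rep phi R g" and g: "snd g = 0"
  shows "\<exists>w\<in>C0 phi R. \<exists>j. evalw phi (rotate j w) = g"
proof -
  obtain w0 where w0: "set w0 \<subseteq> Sset R" "length w0 = wordlen phi R g" "evalw phi w0 = g"
    using gen by (rule obtain_shortest_word)
  define L where "L = levels 0 w0"
  have "height w0 = 0"
    using snd_evalw[of w0] w0(3) g by simp
  then obtain s d where "s \<le> 0" "nat (- s) \<le> d" "d \<le> ups w0" "d \<le> downs w0"
    and L_range: "\<forall>p\<in>set L. s \<le> fst p \<and> fst p \<le> s + int d"
    unfolding L_def by (rule closed_word_levels_range)
  have L_letters: "snd ` set L \<subseteq> R"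
    unfolding L_def using w0(1) by (rule levels_letters)
  define w where "w = height_sorted_word s d L"
  obtain x where gx: "g = (x, 0)"
    using g by (cases g) simp
  have "phipow phi s (fst (evalw phi w)) = x"
    using phipow_fst_evalw_height_sorted_word[OF L_range] fst_evalw[of w0] w0(3) gx
    unfolding w_def L_def by simp
  then have "evalw phi w = (phipow phi (- s) x, 0)"
    using snd_evalw[of w] unfolding w_def by (metis phipow_cancel(2) prod.collapse height_height_sorted_word)
  then have conj: "evalw phi w = gmul phi (gmul phi (0, - s) g) (ginv phi (0, - s))"
    using gmul_conj[of "(0, - s)" x 0] gx by simp
  have "length w \<le> length w0"
    using length_height_sorted_word[OF L_range] length_levels[of w0 0] \<open>d \<le> ups w0\<close> \<open>d \<le> downs w0\<close>
    unfolding w_def L_def by simp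
  with w0(2) conj have "geodesic phi R w"
    using min_conj_rep_geodesic[OF min set_height_sorted_word[OF L_letters]] unfolding w_def by simp
  then have "w \<in> C0 phi R"
    unfolding w_def using L_letters by (rule height_sorted_word_in_C0)
  moreover obtain v v' where "w = v @ v'" "height v = int (nat (- s))"
    unfolding w_def using \<open>nat (- s) \<le> d\<close> by (rule height_sorted_word_split)
  moreover have "int (nat (- s)) = - s"
    using \<open>s \<le> 0\<close> by simp
  ultimately show ?thesis
    using evalw_rotate_height0[OF g] conj by metis
qed

lemma shortest_word_positive_exponent_sum:
  assumes min: "min_conj_rep phi R g"
    and w0: "set w0 \<subseteq> Sset R" "length w0 = wordlen phi R g" "evalw phi w0 = g"
    and m: "0 < m" "snd g = int m"
  shows "ups w0 = m" "downs w0 = 0"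
proof -
  obtain x where gx: "g = (x, int m)"
    using m(2) by (cases g) simp
  define L where "L = levels 0 w0"
  define w where "w = stairs (level_block (\<lambda>h. nat (h mod int m)) L) m"
  have key: "\<forall>p\<in>set L. nat (fst p mod int m) < m"
    using m(1) by (auto simp: nat_less_iff)
  have "fst (evalw phi w) = (\<Sum>p\<leftarrow>L. phipow phi (fst p mod int m) (snd p))"
    using phipow_fst_evalw_stairs_level_block[OF key, of 0] m(1) unfolding w_def by simp
  moreover have "x = (\<Sum>p\<leftarrow>L. phipow phi (fst p) (snd p))"
    using fst_evalw[of w0] w0(3) unfolding L_def gx by simp
  ultimately obtain k where k: "fst (evalw phi w) - x = k - phipow phi (int m) k"
    using sum_list_phipow_mod by metis
  have "snd (evalw phi w) = int m"
    unfolding w_def snd_evalw by simp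
  with k have "evalw phi w = gmul phi (gmul phi (k, 0) g) (ginv phi (k, 0))"
    unfolding gx gmul_conj by (simp add: prod_eq_iff algebra_simps)
  moreover have "set w \<subseteq> Sset R"
    unfolding w_def using set_stairs set_level_block levels_letters[OF w0(1)] L_def by metis
  ultimately have "wordlen phi R g \<le> length w"
    using min wordlen_le_length unfolding min_conj_rep_def by (metis order.trans)
  also have "length w = length L + m"
    unfolding w_def using key by (rule length_stairs_level_block)
  finally have "ups w0 + downs w0 \<le> m"
    using w0(2) length_levels[of w0 0] unfolding L_def by simp
  moreover have "int (ups w0) - int (downs w0) = int m"
    using height_eq_ups_minus_downs[of w0] snd_evalw[of w0] w0(3) m(2) by simp
  ultimately show "ups w0 = m" "downs w0 = 0"
    by simp_all
qed

lemma exponent_sum_positive_case: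
  assumes gen: "\<forall>h. \<exists>w. set w \<subseteq> Sset R \<and> evalw phi w = h"
    and min: "min_conj_rep phi R g" and m: "0 < m" "snd g = int m"
  shows "\<exists>w\<in>Cm phi R m. \<exists>j. evalw phi (rotate j w) = g"
proof -
  obtain w0 where w0: "set w0 \<subseteq> Sset R" "length w0 = wordlen phi R g" "evalw phi w0 = g"
    using gen by (rule obtain_shortest_word)
  note ups_downs = shortest_word_positive_exponent_sum[OF min w0 m]
  then have "Ti \<notin> set w0"
    by (auto simp: downs_def filter_empty_conv)
  with w0(1) have "set w0 \<subseteq> Rg ` R \<union> {T}"
    by (auto simp: Sset_def)
  then obtain us v where us: "length us = m" "\<forall>u\<in>set us. u \<in> WR R" "v \<in> WR R"
    and w0_eq: "w0 = concat (map (\<lambda>u. u @ [T]) us) @ v"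
    using decompose_word_without_Ti ups_downs(1) by metis
  then obtain u us' where us_Cons: "us = u # us'"
    using m(1) by (cases us) auto
  define w where "w = concat (map (\<lambda>u. u @ [T]) ((v @ u) # us'))"
  have w_eq: "w = v @ concat (map (\<lambda>u. u @ [T]) us)"
    unfolding w_def us_Cons by simp
  have "rotate (length v) w = w0"
    unfolding w_eq w0_eq by (simp add: rotate_append)
  have "evalw phi w = gmul phi (gmul phi (evalw phi v) g) (ginv phi (evalw phi v))"
    unfolding w_eq evalw_append_conj w0_eq[symmetric] w0(3) ..
  moreover have "set w \<subseteq> Sset R" "length w = length w0"
    using w0(1) unfolding w_eq w0_eq by auto
  ultimately have "geodesic phi R w"
    using min_conj_rep_geodesic[OF min] w0(2) by simp
  moreover have "\<forall>u\<in>set ((v @ u) # us'). u \<in> WR R"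
    using us us_Cons by (auto simp: WR_def)
  ultimately have "w \<in> Cm phi R m"
    using us(1) us_Cons m(1) unfolding w_def by (intro CmI[where us = "(v @ u) # us'"]) auto
  with \<open>rotate (length v) w = w0\<close> w0(3) show ?thesis
    by blast
qed

end

theorem lemma2p2:
  fixes phi :: "'k::ab_group_add \<Rightarrow> 'k" and R :: "'k set" and g :: "'k \<times> int"
  assumes "is_aut phi"
    and "finite R" and "\<forall>r\<in>R. - r \<in> R"
    and "\<forall>h. \<exists>w. set w \<subseteq> Sset R \<and> evalw phi w = h"
    and "min_conj_rep phi R g"
  shows "(snd g = 0 \<longrightarrow> (\<exists>w\<in>C0 phi R. \<exists>j. evalw phi (rotate j w) = g))
       \<and> (\<forall>m::nat. m > 0 \<and> snd g = int m \<longrightarrow> (\<exists>w\<in>Cm phi R m. \<exists>j. evalw phi (rotate j w) = g))"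
proof -
  interpret automorphism phi
    using assms(1) by unfold_locales
  show ?thesis
    using exponent_sum_zero_case[OF assms(4,5)] exponent_sum_positive_case[OF assms(4,5)] by blast
qed

end
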